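(* Let $K\ge2$, $r\in[0,1]^K$, $a^*\in\arg\max_{a\in[K]}r(a)$, and $\Delta := r(a^* )-\max_{a\ne a^*}r(a)$. Then for any probability vector $\pi$ on $[K]$, $$\sum_{i=1}^K\pi(i)^2\left|r(i)-\pi^\top r\right|^3\ge\frac{\Delta}{K-1}\,\pi(a^* )^2\left(r(a^* )-\pi^\top r\right)^2.$$ *)

theory Defs
  imports Main "HOL.Real"
begin

end

theory Submission
  imports Defs "HOL-Analysis.Convex"
begin

text \<open>Write \<open>m\<close> for the \<open>\<pi>\<close>-mean of \<open>r\<close>, \<open>d = r(a\<^sup>*) - m \<ge> 0\<close> and \<open>p = \<pi>(a\<^sup>*)\<close>.
  Since the deviations \<open>r(i) - m\<close> have \<open>\<pi>\<close>-mean zero, \<open>p d\<close> equals the sum of \<open>\<pi>(i) (m - r(i))\<close>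
  over the \<open>K - 1\<close> suboptimal arms, so by Cauchy-Schwarz their squares sum to at least
  \<open>p\<^sup>2 d\<^sup>2 / (K - 1)\<close>. Each suboptimal arm lies at distance at least \<open>\<Delta> - d\<close> below \<open>m\<close>, so its
  cubed deviation is at least \<open>max (\<Delta> - d) 0\<close> times its squared deviation, while the optimal
  arm contributes \<open>p\<^sup>2 d\<^sup>3 \<ge> d p\<^sup>2 d\<^sup>2 / (K - 1)\<close>. Adding up, the left-hand side is at least
  \<open>(max (\<Delta> - d) 0 + d) p\<^sup>2 d\<^sup>2 / (K - 1) \<ge> \<Delta> p\<^sup>2 d\<^sup>2 / (K - 1)\<close>.\<close>

lemma max_0_mult_square_le_abs_cube:
  fixes c x :: real
  assumes "c \<le> x"
  shows "max c 0 * x\<^sup>2 \<le> \<bar>x\<bar>^3"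
proof (cases "c \<le> 0")
  case False
  then have "c * x\<^sup>2 \<le> x * x\<^sup>2"
    using assms by (intro mult_right_mono) auto
  with False assms show ?thesis
    by (simp add: power2_eq_square power3_eq_cube)
qed simp

lemma divide_of_nat_le_self:
  fixes x :: real
  assumes "0 \<le> x"
  shows "x / of_nat k \<le> x"
  using assms by (cases k) (simp_all add: divide_le_eq mult_le_cancel_left1)

lemma weighted_mean_le:
  fixes \<pi> r :: "'a \<Rightarrow> real"
  assumes "\<And>i. i \<in> A \<Longrightarrow> 0 \<le> \<pi> i" and "sum \<pi> A = 1"
    and "\<And>i. i \<in> A \<Longrightarrow> r i \<le> b"
  shows "(\<Sum>i\<in>A. \<pi> i * r i) \<le> b"
proof -
  have "(\<Sum>i\<in>A. \<pi> i * r i) \<le> (\<Sum>i\<in>A. \<pi> i * b)"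
    using assms by (intro sum_mono mult_left_mono) auto
  also have "\<dots> = b"
    using assms(2) by (simp flip: sum_distrib_right)
  finally show ?thesis .
qed

lemma weighted_mean_gap_eq_sum_others:
  fixes A :: "'a set" and \<pi> r :: "'a \<Rightarrow> real"
  defines "m \<equiv> \<Sum>j\<in>A. \<pi> j * r j"
  assumes "finite A" and "a \<in> A" and "sum \<pi> A = 1"
  shows "\<pi> a * (r a - m) = (\<Sum>i\<in>A - {a}. \<pi> i * (m - r i))"
proof -
  have "(\<Sum>i\<in>A. \<pi> i * (r i - m)) = 0"
    using assms by (simp add: right_diff_distrib sum_subtractf flip: sum_distrib_right)
  with assms(2,3) show ?thesis
    by (simp add: sum.remove right_diff_distrib sum_subtractf algebra_simps)
qed

lemma weighted_cubic_deviation_ge: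
  fixes A :: "'a set" and \<pi> r :: "'a \<Rightarrow> real"
  defines "m \<equiv> \<Sum>j\<in>A. \<pi> j * r j"
  assumes "finite A" and "a \<in> A"
    and "\<And>i. i \<in> A \<Longrightarrow> 0 \<le> \<pi> i" and "sum \<pi> A = 1"
    and "\<And>i. i \<in> A \<Longrightarrow> r i \<le> r a"
    and "\<And>i. i \<in> A - {a} \<Longrightarrow> r i \<le> M"
  shows "(r a - M) / real (card A - 1) * (\<pi> a)\<^sup>2 * (r a - m)\<^sup>2
           \<le> (\<Sum>i\<in>A. (\<pi> i)\<^sup>2 * \<bar>r i - m\<bar>^3)"
proof -
  define p d c where "p = \<pi> a" and "d = r a - m" and "c = max (r a - M - d) 0"
  define q where "q = p\<^sup>2 * d\<^sup>2 / real (card A - 1)"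
  have "m \<le> r a"
    unfolding m_def using assms(3-6) by (intro weighted_mean_le) auto
  then have "0 \<le> d"
    by (simp add: d_def)
  have "q \<ge> 0"
    by (simp add: q_def)
  have "(p * d)\<^sup>2 \<le> (\<Sum>i\<in>A - {a}. (\<pi> i * (m - r i))\<^sup>2) * real (card A - 1)"
    using weighted_mean_gap_eq_sum_others[of A a \<pi> r] sum_squared_le_sum_of_squares[of _ "A - {a}"]
      assms(2,3,5)
    by (simp add: p_def d_def m_def)
  then have cauchy_schwarz: "q \<le> (\<Sum>i\<in>A - {a}. (\<pi> i * (m - r i))\<^sup>2)"
    by (cases "card A - 1 = 0") (simp_all add: q_def pos_divide_le_eq power_mult_distrib sum_nonneg)
  have "c * q \<le> (\<Sum>i\<in>A - {a}. c * (\<pi> i * (m - r i))\<^sup>2)"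
    using cauchy_schwarz by (simp add: c_def mult_left_mono flip: sum_distrib_left)
  also have "\<dots> \<le> (\<Sum>i\<in>A - {a}. (\<pi> i)\<^sup>2 * \<bar>r i - m\<bar>^3)"
  proof (intro sum_mono)
    fix i assume "i \<in> A - {a}"
    then have "max (r a - M - d) 0 * (m - r i)\<^sup>2 \<le> \<bar>m - r i\<bar>^3"
      using assms(7) by (intro max_0_mult_square_le_abs_cube) (auto simp: d_def)
    then show "c * (\<pi> i * (m - r i))\<^sup>2 \<le> (\<pi> i)\<^sup>2 * \<bar>r i - m\<bar>^3"
      using mult_left_mono[OF _ zero_le_power2[of "\<pi> i"]]
      by (simp add: c_def power_mult_distrib abs_minus_commute mult.left_commute)
  qed
  finally have others: "c * q \<le> (\<Sum>i\<in>A - {a}. (\<pi> i)\<^sup>2 * \<bar>r i - m\<bar>^3)" .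
  have "q \<le> p\<^sup>2 * d\<^sup>2"
    unfolding q_def by (rule divide_of_nat_le_self) simp
  then have "d * q \<le> d * (p\<^sup>2 * d\<^sup>2)"
    using \<open>0 \<le> d\<close> by (rule mult_left_mono)
  then have optimal: "d * q \<le> p\<^sup>2 * \<bar>d\<bar>^3"
    using \<open>0 \<le> d\<close> by (simp add: power2_eq_square power3_eq_cube mult_ac)
  have "(r a - M) * q \<le> (c + d) * q"
    using \<open>q \<ge> 0\<close> by (intro mult_right_mono) (auto simp: c_def)
  also have "\<dots> \<le> p\<^sup>2 * \<bar>d\<bar>^3 + (\<Sum>i\<in>A - {a}. (\<pi> i)\<^sup>2 * \<bar>r i - m\<bar>^3)"
    using others optimal by (simp add: distrib_right)
  also have "\<dots> = (\<Sum>i\<in>A. (\<pi> i)\<^sup>2 * \<bar>r i - m\<bar>^3)"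
    using assms(2,3) by (simp add: sum.remove p_def d_def abs_minus_commute)
  finally show ?thesis
    by (simp add: q_def p_def d_def)
qed

theorem lemma16:
  fixes K :: nat and r \<pi> :: "nat \<Rightarrow> real" and astar :: nat
  assumes "K \<ge> 2"
    and "\<And>a. a \<in> {1..K} \<Longrightarrow> 0 \<le> r a \<and> r a \<le> 1"
    and "astar \<in> {1..K}"
    and "\<And>a. a \<in> {1..K} \<Longrightarrow> r a \<le> r astar"
    and "\<And>i. i \<in> {1..K} \<Longrightarrow> \<pi> i \<ge> 0"
    and "(\<Sum>i=1..K. \<pi> i) = 1"
  shows "(\<Sum>i=1..K. (\<pi> i)^2 * \<bar>r i - (\<Sum>j=1..K. \<pi> j * r j)\<bar>^3)
     \<ge> (r astar - Max {r a | a. a \<in> {1..K} \<and> a \<noteq> astar}) / real (K - 1)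
        * (\<pi> astar)^2 * (r astar - (\<Sum>j=1..K. \<pi> j * r j))^2"
proof -
  have "{r a | a. a \<in> {1..K} \<and> a \<noteq> astar} = r ` ({1..K} - {astar})"
    by auto
  then have "\<And>i. i \<in> {1..K} - {astar} \<Longrightarrow> r i \<le> Max {r a | a. a \<in> {1..K} \<and> a \<noteq> astar}"
    by simp
  with assms(3-6) show ?thesis
    using weighted_cubic_deviation_ge[of "{1..K}" astar \<pi> r] by simp
qed

end
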